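(* Let $(F_X,F_Y,F_Z)$ be distribution functions, $F=F_XF_Z$, $G=F_YF_Z$, $K=F_Y+F_Z-F_YF_Z$. Let $\mathbf\Phi$, $\mathbf\Psi$, $\mathbf X$ be nonempty sets of functions $[0,1]\to[0,1]$ such that every triple $(\phi,\psi,\chi)\in\mathbf\Phi\times\mathbf\Psi\times\mathbf X$ is associated to $(F_X,F_Y,F_Z)$. Let $\phi_{\min}=\inf\mathbf\Phi$, $\phi_{\max}=\sup\mathbf\Phi$, $\psi_{\min}=\inf\mathbf\Psi$, $\psi_{\max}=\sup\mathbf\Psi$, $\chi_{\min}=\inf\mathbf X$, $\chi_{\max}=\sup\mathbf X$ (pointwise). Then every triple $(\phi,\psi,\chi)$ with $\phi\in\mathbf\Phi\cup\{\phi_{\min},\phi_{\max}\}$, $\psi\in\mathbf\Psi\cup\{\psi_{\min},\psi_{\max}\}$, $\chi\in\mathbf X\cup\{\chi_{\min},\chi_{\max}\}$ is associated to $(F_X,F_Y,F_Z)$.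
   Context: Distribution functions are non-decreasing maps $\mathbb R\to[0,1]$. A triple $(\phi,\psi,\chi)$ of functions $[0,1]\to[0,1]$ is associated to $(F_X,F_Y,F_Z)$ if: $\phi(F(x))=F_X(x)$ whenever $F(x)>0$, $\psi(G(y))=F_Y(y)$ whenever $G(y)>0$, $\chi(K(y))=F_Y(y)$ whenever $K(y)<1$; $\phi$ and $\psi$ are non-decreasing with $\phi(0)=\psi(0)=0$, $\phi(1)=\psi(1)=1$, and $\phi(u)/u$, $\psi(v)/v$ non-increasing on $(0,1]$; and $\chi$ is non-decreasing with $\chi(0)=0$, $\chi(1)=1$, and $\chi_*(w)=\frac{1-\chi(w)}{w-\chi(w)}$ (values in $[1,\infty]$) non-increasing on $[0,1]$. *)

theory Defs
  imports "HOL-Analysis.Analysis"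
begin

definition distribution_function :: "(real \<Rightarrow> real) \<Rightarrow> bool" where
  "distribution_function F \<longleftrightarrow> mono F \<and> (\<forall>x. 0 \<le> F x \<and> F x \<le> 1)"

definition unit_map :: "(real \<Rightarrow> real) \<Rightarrow> bool" where
  "unit_map f \<longleftrightarrow> (\<forall>u\<in>{0..1}. 0 \<le> f u \<and> f u \<le> 1)"

text \<open>chi_*(w) = (1 - chi w)/(w - chi w) as an extended real; a zero denominator gives infinity,
  except at w = 1 where the expression is 0/0 and the value is set to 1.\<close>
definition chi_star :: "(real \<Rightarrow> real) \<Rightarrow> real \<Rightarrow> ereal" where
  "chi_star ch w = (if w = 1 then 1 else if w - ch w = 0 then \<infinity>
                   else ereal ((1 - ch w) / (w - ch w)))"

definition associated ::
  "(real \<Rightarrow> real) \<Rightarrow> (real \<Rightarrow> real) \<Rightarrow> (real \<Rightarrow> real) \<Rightarrow>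
   (real \<Rightarrow> real) \<Rightarrow> (real \<Rightarrow> real) \<Rightarrow> (real \<Rightarrow> real) \<Rightarrow> bool" where
  "associated \<phi> \<psi> ch FX FY FZ \<longleftrightarrow>
     (let F = (\<lambda>x. FX x * FZ x); G = (\<lambda>y. FY y * FZ y); K = (\<lambda>y. FY y + FZ y - FY y * FZ y) in
     unit_map \<phi> \<and> unit_map \<psi> \<and> unit_map ch \<and>
     (\<forall>x. F x > 0 \<longrightarrow> \<phi> (F x) = FX x) \<and>
     (\<forall>y. G y > 0 \<longrightarrow> \<psi> (G y) = FY y) \<and>
     (\<forall>y. K y < 1 \<longrightarrow> ch (K y) = FY y) \<and>
     mono_on {0..1} \<phi> \<and> \<phi> 0 = 0 \<and> \<phi> 1 = 1 \<and>
     antimono_on {0<..1} (\<lambda>u. \<phi> u / u) \<and>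
     mono_on {0..1} \<psi> \<and> \<psi> 0 = 0 \<and> \<psi> 1 = 1 \<and>
     antimono_on {0<..1} (\<lambda>v. \<psi> v / v) \<and>
     mono_on {0..1} ch \<and> ch 0 = 0 \<and> ch 1 = 1 \<and>
     (\<forall>w\<in>{0..1}. 1 \<le> chi_star ch w) \<and>
     antimono_on {0..1} (chi_star ch))"

end

theory Submission
  imports Defs
begin

text \<open>Each condition in the definition of an associated triple constrains only one of
  \<phi>, \<psi>, \<chi>, and each is of one of three kinds: a prescribed value f a = c, a pointwise bound,
  or monotonicity of f or of a pointwise monotone transform of f (u \<mapsto> f u / u for \<phi> and \<psi>,
  and for \<chi> the ratio (1 - \<chi> w) / (1 - w), whose conjugate exponent is \<chi>_*).
  Pointwise infima and suprema of a nonempty family of functions with values in [0,1] preserve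
  all three kinds, because the transforms are continuous and monotone and so commute with them.\<close>

lemma monotone_on_cong:
  "(\<And>x. x \<in> A \<Longrightarrow> f x = g x) \<Longrightarrow> monotone_on A ord ord' f \<longleftrightarrow> monotone_on A ord ord' g"
  by (simp add: monotone_on_def)

lemma antimono_on_iff_monotone_on_ge: "antimono_on A f \<longleftrightarrow> monotone_on A (\<ge>) (\<le>) f"
  by (auto simp: monotone_on_def)

lemma cINF_eq_const:
  "I \<noteq> {} \<Longrightarrow> (\<And>i. i \<in> I \<Longrightarrow> f i = x) \<Longrightarrow> (INF i\<in>I. f i) = (x :: 'a::conditionally_complete_lattice)"
  using INF_cong[of I I f "\<lambda>_. x"] by simp

lemma cSUP_eq_const:
  "I \<noteq> {} \<Longrightarrow> (\<And>i. i \<in> I \<Longrightarrow> f i = x) \<Longrightarrow> (SUP i\<in>I. f i) = (x :: 'a::conditionally_complete_lattice)"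
  using SUP_cong[of I I f "\<lambda>_. x"] by simp

lemma INF_divide_pos:
  fixes f :: "'i \<Rightarrow> real"
  assumes "c > 0" "S \<noteq> {}" "bdd_below (f ` S)"
  shows "(INF i\<in>S. f i) / c = (INF i\<in>S. f i / c)"
  using continuous_at_Inf_mono[of "\<lambda>x. x / c" "f ` S"] assms
  by (simp add: image_image mono_def divide_right_mono continuous_intros)

lemma SUP_divide_pos:
  fixes f :: "'i \<Rightarrow> real"
  assumes "c > 0" "S \<noteq> {}" "bdd_above (f ` S)"
  shows "(SUP i\<in>S. f i) / c = (SUP i\<in>S. f i / c)"
  using continuous_at_Sup_mono[of "\<lambda>x. x / c" "f ` S"] assms
  by (simp add: image_image mono_def divide_right_mono continuous_intros)

lemma diff_INF_divide_pos:
  fixes f :: "'i \<Rightarrow> real"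
  assumes "c > 0" "S \<noteq> {}" "bdd_below (f ` S)"
  shows "(a - (INF i\<in>S. f i)) / c = (SUP i\<in>S. (a - f i) / c)"
  using continuous_at_Inf_antimono[of "\<lambda>x. (a - x) / c" "f ` S"] assms
  by (simp add: image_image antimono_def divide_right_mono continuous_intros)

lemma diff_SUP_divide_pos:
  fixes f :: "'i \<Rightarrow> real"
  assumes "c > 0" "S \<noteq> {}" "bdd_above (f ` S)"
  shows "(a - (SUP i\<in>S. f i)) / c = (INF i\<in>S. (a - f i) / c)"
  using continuous_at_Sup_antimono[of "\<lambda>x. (a - x) / c" "f ` S"] assms
  by (simp add: image_image antimono_def divide_right_mono continuous_intros)

lemma monotone_on_INF:
  fixes f :: "'i \<Rightarrow> 'a \<Rightarrow> 'b::conditionally_complete_lattice"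
  assumes "S \<noteq> {}" "\<And>u. u \<in> A \<Longrightarrow> bdd_below ((\<lambda>i. f i u) ` S)"
    and "\<And>i. i \<in> S \<Longrightarrow> monotone_on A ord (\<le>) (f i)"
  shows "monotone_on A ord (\<le>) (\<lambda>u. INF i\<in>S. f i u)"
  using assms by (intro monotone_onI cINF_mono) (auto dest: monotone_onD)

lemma monotone_on_SUP:
  fixes f :: "'i \<Rightarrow> 'a \<Rightarrow> 'b::conditionally_complete_lattice"
  assumes "S \<noteq> {}" "\<And>u. u \<in> A \<Longrightarrow> bdd_above ((\<lambda>i. f i u) ` S)"
    and "\<And>i. i \<in> S \<Longrightarrow> monotone_on A ord (\<le>) (f i)"
  shows "monotone_on A ord (\<le>) (\<lambda>u. SUP i\<in>S. f i u)"
  using assms by (intro monotone_onI cSUP_mono) (auto dest: monotone_onD)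

lemma unit_map_family_bdd:
  assumes "\<forall>f\<in>S. unit_map f" "u \<in> {0..1}"
  shows "bdd_below ((\<lambda>f. f u) ` S)" "bdd_above ((\<lambda>f. f u) ` S)"
  using assms by (auto simp: unit_map_def intro!: bdd_belowI2[where m = 0] bdd_aboveI2[where M = 1])

lemma unit_map_INF:
  assumes "S \<noteq> {}" "\<forall>f\<in>S. unit_map f"
  shows "unit_map (\<lambda>u. INF f\<in>S. f u)"
  unfolding unit_map_def
proof
  fix u :: real
  assume u: "u \<in> {0..1}"
  obtain f where "f \<in> S" using assms by blast
  then show "0 \<le> (INF f\<in>S. f u) \<and> (INF f\<in>S. f u) \<le> 1"
    using assms u unit_map_family_bdd[OF assms(2) u]
    by (auto simp: unit_map_def intro!: cINF_greatest intro: cINF_lower2)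
qed

lemma unit_map_SUP:
  assumes "S \<noteq> {}" "\<forall>f\<in>S. unit_map f"
  shows "unit_map (\<lambda>u. SUP f\<in>S. f u)"
  unfolding unit_map_def
proof
  fix u :: real
  assume u: "u \<in> {0..1}"
  obtain f where "f \<in> S" using assms by blast
  then show "0 \<le> (SUP f\<in>S. f u) \<and> (SUP f\<in>S. f u) \<le> 1"
    using assms u unit_map_family_bdd[OF assms(2) u]
    by (auto simp: unit_map_def intro!: cSUP_least intro: cSUP_upper2)
qed

text \<open>For w < 1 and r = (1 - \<chi> w) / (1 - w) one has 1/r + 1/\<chi>_*(w) = 1, so \<chi>_* is
  non-increasing exactly where r is non-decreasing.\<close>

definition conjugate_exponent :: "real \<Rightarrow> ereal" where
  "conjugate_exponent r = (if r = 1 then \<infinity> else ereal (r / (r - 1)))"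

lemma conjugate_exponent_le_iff:
  assumes "1 \<le> p" "1 \<le> q"
  shows "conjugate_exponent q \<le> conjugate_exponent p \<longleftrightarrow> p \<le> q"
proof -
  have "q / (q - 1) \<le> p / (p - 1) \<longleftrightarrow> p \<le> q" if "1 < p" "1 < q"
    using that by (simp add: divide_simps) (simp add: algebra_simps)
  then show ?thesis
    using assms by (cases "p = 1"; cases "q = 1") (auto simp: conjugate_exponent_def)
qed

lemma chi_star_eq_conjugate_exponent:
  assumes "w < 1" "ch w \<le> w"
  shows "chi_star ch w = conjugate_exponent ((1 - ch w) / (1 - w))"
proof (cases "ch w = w")
  case False
  then have "(1 - ch w) / (1 - w) \<noteq> 1" and
    "(1 - ch w) / (1 - w) / ((1 - ch w) / (1 - w) - 1) = (1 - ch w) / (w - ch w)"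
    using assms by (auto simp: divide_simps)
  then show ?thesis
    using False assms by (simp add: chi_star_def conjugate_exponent_def)
qed (use assms in \<open>simp add: chi_star_def conjugate_exponent_def\<close>)

lemma one_le_chi_star_iff:
  assumes "w < 1" "ch w \<le> 1"
  shows "1 \<le> chi_star ch w \<longleftrightarrow> ch w \<le> w"
proof (cases "ch w \<le> w")
  case True
  then show ?thesis
    using assms by (auto simp: chi_star_def le_divide_eq)
next
  case False
  then have "(1 - ch w) / (w - ch w) \<le> 0"
    using assms by (intro divide_nonneg_neg) auto
  then show ?thesis
    using False assms by (simp add: chi_star_def)
qed

lemma antimono_on_chi_star_iff:
  assumes below: "\<forall>w\<in>{0..<1}. ch w \<le> w"
  shows "antimono_on {0..1} (chi_star ch) \<longleftrightarrow> mono_on {0..<1} (\<lambda>w. (1 - ch w) / (1 - w))"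
proof -
  have "1 \<le> (1 - ch w) / (1 - w)" if "w \<in> {0..<1}" for w
    using below that by (simp add: le_divide_eq)
  then have interior: "chi_star ch w2 \<le> chi_star ch w1 \<longleftrightarrow>
      (1 - ch w1) / (1 - w1) \<le> (1 - ch w2) / (1 - w2)" if "w1 \<in> {0..<1}" "w2 \<in> {0..<1}" for w1 w2
    using that below by (simp add: chi_star_eq_conjugate_exponent conjugate_exponent_le_iff)
  have endpoint: "chi_star ch 1 \<le> chi_star ch w" if "w \<in> {0..1}" for w
  proof (cases "w = 1")
    case False
    with that below have "w < 1" "ch w \<le> w" by auto
    then have "1 \<le> chi_star ch w"
      by (subst one_le_chi_star_iff) auto
    then show ?thesis by (simp add: chi_star_def)
  qed simp
  show ?thesis
  proof
    assume anti: "antimono_on {0..1} (chi_star ch)"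
    show "mono_on {0..<1} (\<lambda>w. (1 - ch w) / (1 - w))"
    proof (rule monotone_onI)
      fix w1 w2 :: real
      assume w: "w1 \<in> {0..<1}" "w2 \<in> {0..<1}" "w1 \<le> w2"
      then have "chi_star ch w2 \<le> chi_star ch w1"
        using monotone_onD[OF anti, of w1 w2] by auto
      with w interior show "(1 - ch w1) / (1 - w1) \<le> (1 - ch w2) / (1 - w2)" by simp
    qed
  next
    assume mono: "mono_on {0..<1} (\<lambda>w. (1 - ch w) / (1 - w))"
    show "antimono_on {0..1} (chi_star ch)"
    proof (rule monotone_onI)
      fix w1 w2 :: real
      assume w: "w1 \<in> {0..1}" "w2 \<in> {0..1}" "w1 \<le> w2"
      show "chi_star ch w2 \<le> chi_star ch w1"
      proof (cases "w2 = 1")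
        case False
        with w have "w1 \<in> {0..<1}" "w2 \<in> {0..<1}" by auto
        with w interior monotone_onD[OF mono] show ?thesis by simp
      qed (use w endpoint in simp)
    qed
  qed
qed

lemma chi_star_conditions_iff:
  assumes "unit_map ch"
  shows "(\<forall>w\<in>{0..1}. 1 \<le> chi_star ch w) \<and> antimono_on {0..1} (chi_star ch) \<longleftrightarrow>
         (\<forall>w\<in>{0..<1}. ch w \<le> w) \<and> mono_on {0..<1} (\<lambda>w. (1 - ch w) / (1 - w))"
proof -
  have "1 \<le> chi_star ch w \<longleftrightarrow> ch w \<le> w" if "w \<in> {0..<1}" for w
    using assms that by (intro one_le_chi_star_iff) (auto simp: unit_map_def)
  moreover have "chi_star ch 1 = 1"
    by (simp add: chi_star_def)
  ultimately have "(\<forall>w\<in>{0..1}. 1 \<le> chi_star ch w) \<longleftrightarrow> (\<forall>w\<in>{0..<1}. ch w \<le> w)"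
    by (metis atLeastAtMost_iff atLeastLessThan_iff order.refl order_less_le)
  then show ?thesis
    using antimono_on_chi_star_iff by blast
qed

definition phi_admissible :: "(real \<Rightarrow> real) \<Rightarrow> (real \<Rightarrow> real) \<Rightarrow> (real \<Rightarrow> real) \<Rightarrow> bool" where
  "phi_admissible \<phi> H T \<longleftrightarrow> unit_map \<phi> \<and> (\<forall>x. H x > 0 \<longrightarrow> \<phi> (H x) = T x) \<and>
     mono_on {0..1} \<phi> \<and> \<phi> 0 = 0 \<and> \<phi> 1 = 1 \<and> antimono_on {0<..1} (\<lambda>u. \<phi> u / u)"

definition chi_admissible :: "(real \<Rightarrow> real) \<Rightarrow> (real \<Rightarrow> real) \<Rightarrow> (real \<Rightarrow> real) \<Rightarrow> bool" where
  "chi_admissible ch K T \<longleftrightarrow> unit_map ch \<and> (\<forall>y. K y < 1 \<longrightarrow> ch (K y) = T y) \<and>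
     mono_on {0..1} ch \<and> ch 0 = 0 \<and> ch 1 = 1 \<and>
     (\<forall>w\<in>{0..<1}. ch w \<le> w) \<and> mono_on {0..<1} (\<lambda>w. (1 - ch w) / (1 - w))"

lemma associated_iff_admissible:
  "associated \<phi> \<psi> ch FX FY FZ \<longleftrightarrow>
     phi_admissible \<phi> (\<lambda>x. FX x * FZ x) FX \<and> phi_admissible \<psi> (\<lambda>y. FY y * FZ y) FY \<and>
     chi_admissible ch (\<lambda>y. FY y + FZ y - FY y * FZ y) FY"
  unfolding associated_def phi_admissible_def chi_admissible_def Let_def
  using chi_star_conditions_iff[of ch] by blast

lemma phi_admissible_INF:
  assumes S: "S \<noteq> {}" and adm: "\<forall>f\<in>S. phi_admissible f H T"
  shows "phi_admissible (\<lambda>u. INF f\<in>S. f u) H T"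
proof -
  have unit: "\<forall>f\<in>S. unit_map f"
    using adm by (simp add: phi_admissible_def)
  note bdd = unit_map_family_bdd[OF unit]
  have quotient: "(INF f\<in>S. f u) / u = (INF f\<in>S. f u / u)" if "u \<in> {0<..1}" for u
    using that S bdd(1)[of u] by (intro INF_divide_pos) auto
  have anti: "antimono_on {0<..1} (\<lambda>u. INF f\<in>S. f u / u)"
    unfolding antimono_on_iff_monotone_on_ge
  proof (rule monotone_on_INF)
    show "bdd_below ((\<lambda>f. f u / u) ` S)" if "u \<in> {0<..1}" for u
      using unit that by (auto simp: unit_map_def intro!: bdd_belowI2[where m = 0])
    show "monotone_on {0<..1} (\<ge>) (\<le>) (\<lambda>u. f u / u)" if "f \<in> S" for f
      using adm that unfolding phi_admissible_def antimono_on_iff_monotone_on_ge by blast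
  qed (fact S)
  show ?thesis
    unfolding phi_admissible_def
  proof (intro conjI)
    show "unit_map (\<lambda>u. INF f\<in>S. f u)"
      using S unit by (rule unit_map_INF)
    show "mono_on {0..1} (\<lambda>u. INF f\<in>S. f u)"
      using S bdd(1) adm by (intro monotone_on_INF) (auto simp: phi_admissible_def)
    show "antimono_on {0<..1} (\<lambda>u. (INF f\<in>S. f u) / u)"
      using anti by (subst monotone_on_cong[where g = "\<lambda>u. INF f\<in>S. f u / u"])
        (simp_all add: quotient)
    show "\<forall>x. H x > 0 \<longrightarrow> (INF f\<in>S. f (H x)) = T x" "(INF f\<in>S. f 0) = 0" "(INF f\<in>S. f 1) = 1"
      using S adm by (intro allI impI cINF_eq_const; simp add: phi_admissible_def)+
  qed
qed

lemma phi_admissible_SUP: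
  assumes S: "S \<noteq> {}" and adm: "\<forall>f\<in>S. phi_admissible f H T"
  shows "phi_admissible (\<lambda>u. SUP f\<in>S. f u) H T"
proof -
  have unit: "\<forall>f\<in>S. unit_map f"
    using adm by (simp add: phi_admissible_def)
  note bdd = unit_map_family_bdd[OF unit]
  have quotient: "(SUP f\<in>S. f u) / u = (SUP f\<in>S. f u / u)" if "u \<in> {0<..1}" for u
    using that S bdd(2)[of u] by (intro SUP_divide_pos) auto
  have anti: "antimono_on {0<..1} (\<lambda>u. SUP f\<in>S. f u / u)"
    unfolding antimono_on_iff_monotone_on_ge
  proof (rule monotone_on_SUP)
    show "bdd_above ((\<lambda>f. f u / u) ` S)" if "u \<in> {0<..1}" for u
      using unit that
      by (auto simp: unit_map_def divide_le_eq intro!: bdd_aboveI2[where M = "1 / u"])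
    show "monotone_on {0<..1} (\<ge>) (\<le>) (\<lambda>u. f u / u)" if "f \<in> S" for f
      using adm that unfolding phi_admissible_def antimono_on_iff_monotone_on_ge by blast
  qed (fact S)
  show ?thesis
    unfolding phi_admissible_def
  proof (intro conjI)
    show "unit_map (\<lambda>u. SUP f\<in>S. f u)"
      using S unit by (rule unit_map_SUP)
    show "mono_on {0..1} (\<lambda>u. SUP f\<in>S. f u)"
      using S bdd(2) adm by (intro monotone_on_SUP) (auto simp: phi_admissible_def)
    show "antimono_on {0<..1} (\<lambda>u. (SUP f\<in>S. f u) / u)"
      using anti by (subst monotone_on_cong[where g = "\<lambda>u. SUP f\<in>S. f u / u"])
        (simp_all add: quotient)
    show "\<forall>x. H x > 0 \<longrightarrow> (SUP f\<in>S. f (H x)) = T x" "(SUP f\<in>S. f 0) = 0" "(SUP f\<in>S. f 1) = 1"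
      using S adm by (intro allI impI cSUP_eq_const; simp add: phi_admissible_def)+
  qed
qed

lemma chi_admissible_INF:
  assumes S: "S \<noteq> {}" and adm: "\<forall>f\<in>S. chi_admissible f K T"
  shows "chi_admissible (\<lambda>w. INF f\<in>S. f w) K T"
proof -
  have unit: "\<forall>f\<in>S. unit_map f"
    using adm by (simp add: chi_admissible_def)
  note bdd = unit_map_family_bdd[OF unit]
  have ratio: "(1 - (INF f\<in>S. f w)) / (1 - w) = (SUP f\<in>S. (1 - f w) / (1 - w))" if "w \<in> {0..<1}" for w
    using that S bdd(1)[of w] by (intro diff_INF_divide_pos) auto
  have mono: "mono_on {0..<1} (\<lambda>w. SUP f\<in>S. (1 - f w) / (1 - w))"
  proof (rule monotone_on_SUP)
    show "bdd_above ((\<lambda>f. (1 - f w) / (1 - w)) ` S)" if "w \<in> {0..<1}" for w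
      using unit that
      by (auto simp: unit_map_def divide_le_eq intro!: bdd_aboveI2[where M = "1 / (1 - w)"])
  qed (use S adm in \<open>auto simp: chi_admissible_def\<close>)
  obtain f0 where "f0 \<in> S"
    using S by blast
  show ?thesis
    unfolding chi_admissible_def
  proof (intro conjI)
    show "unit_map (\<lambda>w. INF f\<in>S. f w)"
      using S unit by (rule unit_map_INF)
    show "mono_on {0..1} (\<lambda>w. INF f\<in>S. f w)"
      using S bdd(1) adm by (intro monotone_on_INF) (auto simp: chi_admissible_def)
    show "\<forall>w\<in>{0..<1}. (INF f\<in>S. f w) \<le> w"
      using \<open>f0 \<in> S\<close> adm bdd(1) by (auto simp: chi_admissible_def intro: cINF_lower2)
    show "mono_on {0..<1} (\<lambda>w. (1 - (INF f\<in>S. f w)) / (1 - w))"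
      using mono by (subst monotone_on_cong[where g = "\<lambda>w. SUP f\<in>S. (1 - f w) / (1 - w)"])
        (simp_all add: ratio)
    show "\<forall>y. K y < 1 \<longrightarrow> (INF f\<in>S. f (K y)) = T y" "(INF f\<in>S. f 0) = 0" "(INF f\<in>S. f 1) = 1"
      using S adm by (intro allI impI cINF_eq_const; simp add: chi_admissible_def)+
  qed
qed

lemma chi_admissible_SUP:
  assumes S: "S \<noteq> {}" and adm: "\<forall>f\<in>S. chi_admissible f K T"
  shows "chi_admissible (\<lambda>w. SUP f\<in>S. f w) K T"
proof -
  have unit: "\<forall>f\<in>S. unit_map f"
    using adm by (simp add: chi_admissible_def)
  note bdd = unit_map_family_bdd[OF unit]
  have ratio: "(1 - (SUP f\<in>S. f w)) / (1 - w) = (INF f\<in>S. (1 - f w) / (1 - w))" if "w \<in> {0..<1}" for w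
    using that S bdd(2)[of w] by (intro diff_SUP_divide_pos) auto
  have mono: "mono_on {0..<1} (\<lambda>w. INF f\<in>S. (1 - f w) / (1 - w))"
  proof (rule monotone_on_INF)
    show "bdd_below ((\<lambda>f. (1 - f w) / (1 - w)) ` S)" if "w \<in> {0..<1}" for w
      using unit that by (auto simp: unit_map_def intro!: bdd_belowI2[where m = 0])
  qed (use S adm in \<open>auto simp: chi_admissible_def\<close>)
  show ?thesis
    unfolding chi_admissible_def
  proof (intro conjI)
    show "unit_map (\<lambda>w. SUP f\<in>S. f w)"
      using S unit by (rule unit_map_SUP)
    show "mono_on {0..1} (\<lambda>w. SUP f\<in>S. f w)"
      using S bdd(2) adm by (intro monotone_on_SUP) (auto simp: chi_admissible_def)
    show "\<forall>w\<in>{0..<1}. (SUP f\<in>S. f w) \<le> w"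
      using S adm by (auto simp: chi_admissible_def intro: cSUP_least)
    show "mono_on {0..<1} (\<lambda>w. (1 - (SUP f\<in>S. f w)) / (1 - w))"
      using mono by (subst monotone_on_cong[where g = "\<lambda>w. INF f\<in>S. (1 - f w) / (1 - w)"])
        (simp_all add: ratio)
    show "\<forall>y. K y < 1 \<longrightarrow> (SUP f\<in>S. f (K y)) = T y" "(SUP f\<in>S. f 0) = 0" "(SUP f\<in>S. f 1) = 1"
      using S adm by (intro allI impI cSUP_eq_const; simp add: chi_admissible_def)+
  qed
qed

theorem proposition4:
  fixes FX FY FZ :: "real \<Rightarrow> real"
    and Phi Psi Chi :: "(real \<Rightarrow> real) set"
  assumes "distribution_function FX" "distribution_function FY" "distribution_function FZ"
    and "Phi \<noteq> {}" "Psi \<noteq> {}" "Chi \<noteq> {}"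
    and "\<forall>\<phi>\<in>Phi. \<forall>\<psi>\<in>Psi. \<forall>ch\<in>Chi. associated \<phi> \<psi> ch FX FY FZ"
  shows "\<forall>\<phi>\<in>Phi \<union> {(\<lambda>u. INF f\<in>Phi. f u), (\<lambda>u. SUP f\<in>Phi. f u)}.
         \<forall>\<psi>\<in>Psi \<union> {(\<lambda>v. INF f\<in>Psi. f v), (\<lambda>v. SUP f\<in>Psi. f v)}.
         \<forall>ch\<in>Chi \<union> {(\<lambda>w. INF f\<in>Chi. f w), (\<lambda>w. SUP f\<in>Chi. f w)}.
           associated \<phi> \<psi> ch FX FY FZ"
proof -
  obtain \<phi>0 \<psi>0 ch0 where "\<phi>0 \<in> Phi" "\<psi>0 \<in> Psi" "ch0 \<in> Chi"
    using assms(4-6) by blast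
  then have Phi: "\<forall>f\<in>Phi. phi_admissible f (\<lambda>x. FX x * FZ x) FX"
    and Psi: "\<forall>f\<in>Psi. phi_admissible f (\<lambda>y. FY y * FZ y) FY"
    and Chi: "\<forall>f\<in>Chi. chi_admissible f (\<lambda>y. FY y + FZ y - FY y * FZ y) FY"
    using assms(7) unfolding associated_iff_admissible by blast+
  show ?thesis
    unfolding associated_iff_admissible
    using Phi phi_admissible_INF[OF assms(4) Phi] phi_admissible_SUP[OF assms(4) Phi]
      Psi phi_admissible_INF[OF assms(5) Psi] phi_admissible_SUP[OF assms(5) Psi]
      Chi chi_admissible_INF[OF assms(6) Chi] chi_admissible_SUP[OF assms(6) Chi]
    by blast
qed

end
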